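(* For all $f_1,\dots,f_n:\mathscr{P}\to\mathbb{Q}$: (i) $\langle f_1\odot f_2\odot\cdots\odot f_n\rangle_q=\langle f_1\rangle_q\langle f_2\rangle_q\cdots\langle f_n\rangle_q$; (ii) $\langle f_1|\cdots|f_n\rangle_q=\langle f_1\otimes\cdots\otimes f_n\rangle_q$.
   Context: $\mathscr{P}$ is the set of partitions, $|\lambda|=\sum\lambda_i$. $\langle f\rangle_q=\frac{\sum_\lambda f(\lambda)q^{|\lambda|}}{\sum_\lambda q^{|\lambda|}}$. Induced product: with $u_\lambda=\prod_{i:\lambda_i>0}u_{\lambda_i}$ and $\langle f\rangle_{\vec u}=\frac{\sum_\lambda f(\lambda)u_\lambda}{\sum_\lambda u_\lambda}\in\mathbb{Q}[[u_1,u_2,\dots]]$ (a linear bijection in $f$), $f\odot g$ is defined by $\langle f\odot g\rangle_{\vec u}=\langle f\rangle_{\vec u}\langle g\rangle_{\vec u}$. $\Pi(n)$ is the set of set partitions of $\{1,\dots,n\}$, $\ell(\alpha)$ the number of blocks, $\mu(\alpha,\mathbf{1})=(-1)^{\ell(\alpha)-1}(\ell(\alpha)-1)!$, and $f_A=\prod_{a\in A}f_a$ (pointwise product). The connected product is $f_1|\cdots|f_n=\sum_{\alpha\in\Pi(n)}\mu(\alpha,\mathbf{1})\bigodot_{A\in\alpha}f_A$, and the connected $q$-bracket is $\langle f_1\otimes\cdots\otimes f_n\rangle_q=\sum_{\alpha\in\Pi(n)}\mu(\alpha,\mathbf{1})\prod_{A\in\alpha}\langle f_A\rangle_q$. *)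

theory Defs
  imports "HOL-Library.Multiset" "HOL-Library.FuncSet" "HOL-Library.Disjoint_Sets"
          "HOL-Computational_Algebra.Formal_Power_Series"
begin

typedef partition = "{M :: nat multiset. 0 \<notin># M}"
  by (rule exI[of _ "{#}"]) simp

definition psize :: "partition \<Rightarrow> nat" where
  "psize p = sum_mset (Rep_partition p)"

text \<open>A monomial u_lambda = prod u_{lambda_i} corresponds bijectively to a partition lambda,
  so an element of Q[[u_1,u_2,...]] is represented by its coefficient function
  F :: partition => rat (F lambda = coefficient of u_lambda). Since u_alpha u_beta = u_(alpha + beta)
  (multiset union), multiplication is the Cauchy product below.\<close>

type_synonym useries = "partition \<Rightarrow> rat"

definition useries_mult :: "useries \<Rightarrow> useries \<Rightarrow> useries" where
  "useries_mult F G p =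
     (\<Sum>(\<alpha>, \<beta>) \<in> {(\<alpha>, \<beta>). Rep_partition \<alpha> + Rep_partition \<beta> = Rep_partition p}.
        F \<alpha> * G \<beta>)"

definition useries_prod :: "'i set \<Rightarrow> ('i \<Rightarrow> useries) \<Rightarrow> useries" where
  "useries_prod I F p =
     (\<Sum>d \<in> {d \<in> I \<rightarrow>\<^sub>E UNIV. (\<Sum>i\<in>I. Rep_partition (d i)) = Rep_partition p}.
        \<Prod>i\<in>I. F i (d i))"

definition ubracket :: "(partition \<Rightarrow> rat) \<Rightarrow> useries" where
  "ubracket f = (THE G. useries_mult G (\<lambda>_. 1) = f)"

definition induced_prod :: "(partition \<Rightarrow> rat) \<Rightarrow> (partition \<Rightarrow> rat) \<Rightarrow> (partition \<Rightarrow> rat)" where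
  "induced_prod f g = (THE h. ubracket h = useries_mult (ubracket f) (ubracket g))"

fun odot_list :: "(partition \<Rightarrow> rat) list \<Rightarrow> (partition \<Rightarrow> rat)" where
  "odot_list [] = (\<lambda>_. 1)"
| "odot_list [g] = g"
| "odot_list (g # h # gs) = induced_prod g (odot_list (h # gs))"

definition odot_set :: "'i set \<Rightarrow> ('i \<Rightarrow> partition \<Rightarrow> rat) \<Rightarrow> (partition \<Rightarrow> rat)" where
  "odot_set I g = (THE h. ubracket h = useries_prod I (\<lambda>i. ubracket (g i)))"

definition qbracket :: "(partition \<Rightarrow> rat) \<Rightarrow> rat fps" where
  "qbracket f =
     Abs_fps (\<lambda>n. \<Sum>p \<in> {p. psize p = n}. f p) /
     Abs_fps (\<lambda>n. of_nat (card {p. psize p = n}))"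

definition set_partitions :: "nat \<Rightarrow> nat set set set" where
  "set_partitions n = {\<alpha>. partition_on {1..n} \<alpha>}"

definition mu_one :: "nat set set \<Rightarrow> int" where
  "mu_one \<alpha> = (-1) ^ (card \<alpha> - 1) * fact (card \<alpha> - 1)"

definition fprod :: "(nat \<Rightarrow> partition \<Rightarrow> rat) \<Rightarrow> nat set \<Rightarrow> partition \<Rightarrow> rat" where
  "fprod f A = (\<lambda>p. \<Prod>a\<in>A. f a p)"

definition connected_prod :: "nat \<Rightarrow> (nat \<Rightarrow> partition \<Rightarrow> rat) \<Rightarrow> (partition \<Rightarrow> rat)" where
  "connected_prod n f =
     (\<lambda>p. \<Sum>\<alpha>\<in>set_partitions n. of_int (mu_one \<alpha>) * odot_set \<alpha> (fprod f) p)"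

definition connected_qbracket :: "nat \<Rightarrow> (nat \<Rightarrow> partition \<Rightarrow> rat) \<Rightarrow> rat fps" where
  "connected_qbracket n f =
     (\<Sum>\<alpha>\<in>set_partitions n. of_int (mu_one \<alpha>) * (\<Prod>A\<in>\<alpha>. qbracket (fprod f A)))"

end

theory Submission
  imports Defs
begin

text \<open>Specialising \<open>u\<^sub>k \<mapsto> q\<^sup>k\<close> is a ring homomorphism from \<open>\<rat>[[u\<^sub>1, u\<^sub>2, \<dots>]]\<close> to
  \<open>\<rat>[[q]]\<close>, because partition sizes add under union. It sends \<open>\<Sum>\<^sub>\<lambda> f(\<lambda>) u\<^sub>\<lambda>\<close> and
  \<open>\<Sum>\<^sub>\<lambda> u\<^sub>\<lambda>\<close> to the numerator and denominator of \<open>\<langle>f\<rangle>\<^sub>q\<close>, so \<open>\<langle>f\<rangle>\<^sub>q\<close> is the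
  specialisation of \<open>\<langle>f\<rangle>\<^sub>u\<close>. The defining identity \<open>\<langle>f \<odot> g\<rangle>\<^sub>u = \<langle>f\<rangle>\<^sub>u \<langle>g\<rangle>\<^sub>u\<close> of
  the induced product therefore descends to the \<open>q\<close>-bracket, which gives (i); (ii) follows
  from (i), applied blockwise, by linearity of the \<open>q\<close>-bracket.\<close>

unbundle fps_syntax

lemma zero_not_in_Rep_partition [simp]: "0 \<notin># Rep_partition p"
  using Rep_partition by auto

lemma Rep_Abs_partition [simp]: "0 \<notin># M \<Longrightarrow> Rep_partition (Abs_partition M) = M"
  by (simp add: Abs_partition_inverse)

lemma sum_mset_pos: "(0::nat) \<notin># M \<Longrightarrow> M \<noteq> {#} \<Longrightarrow> 0 < sum_mset M"
  by (metis gr0I multiset_nonemptyE sum_mset_0_iff)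

lemma size_le_sum_mset: "(0::nat) \<notin># M \<Longrightarrow> size M \<le> sum_mset M"
  by (induction M) auto

lemma psize_eq_0_iff: "psize p = 0 \<longleftrightarrow> Rep_partition p = {#}"
  using sum_mset_pos[OF zero_not_in_Rep_partition[of p]]
  unfolding psize_def by (metis less_irrefl sum_mset.empty)

lemma psize_eq_0_set: "{p. psize p = 0} = {Abs_partition {#}}"
  by (auto simp: psize_eq_0_iff simp flip: Rep_partition_inject)

lemma psize_less: "Rep_partition \<alpha> \<subset># Rep_partition p \<Longrightarrow> psize \<alpha> < psize p"
proof -
  assume "Rep_partition \<alpha> \<subset># Rep_partition p"
  then obtain c where c: "Rep_partition p = Rep_partition \<alpha> + c" "c \<noteq> {#}"
    by (metis subset_mset.lessE)
  then have "0 \<notin># c" using zero_not_in_Rep_partition[of p] by (metis union_iff)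
  with c show ?thesis by (simp add: psize_def sum_mset_pos)
qed

lemma finite_psize_le: "finite {p. psize p \<le> n}"
proof -
  have "Rep_partition ` {p. psize p \<le> n} \<subseteq> (\<Union>k\<le>n. multisets_of_size {1..n} k)"
  proof safe
    fix p assume n: "psize p \<le> n"
    have "x \<in> {1..n}" if "x \<in># Rep_partition p" for x
      using that n zero_not_in_Rep_partition[of p] multi_member_split[OF that]
      by (fastforce simp: psize_def)
    moreover have "size (Rep_partition p) \<le> n"
      using size_le_sum_mset[of "Rep_partition p"] n by (simp add: psize_def)
    ultimately show "Rep_partition p \<in> (\<Union>k\<le>n. multisets_of_size {1..n} k)"
      by (auto simp: multisets_of_size_def)
  qed
  then have "finite (Rep_partition ` {p. psize p \<le> n})"
    by (rule finite_subset) auto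
  then show ?thesis
    by (rule finite_imageD) (simp add: inj_on_def Rep_partition_inject)
qed

lemma finite_psize_eq: "finite {p. psize p = n}"
  by (rule finite_subset[OF _ finite_psize_le[of n]]) auto

definition punion :: "partition \<Rightarrow> partition \<Rightarrow> partition" where
  "punion \<alpha> \<beta> = Abs_partition (Rep_partition \<alpha> + Rep_partition \<beta>)"

lemma Rep_punion: "Rep_partition (punion \<alpha> \<beta>) = Rep_partition \<alpha> + Rep_partition \<beta>"
  by (simp add: punion_def)

lemma psize_punion: "psize (punion \<alpha> \<beta>) = psize \<alpha> + psize \<beta>"
  by (simp add: psize_def Rep_punion)

definition partition_splits :: "partition \<Rightarrow> (partition \<times> partition) set" where
  "partition_splits p = {(\<alpha>, \<beta>). Rep_partition \<alpha> + Rep_partition \<beta> = Rep_partition p}"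

lemma partition_splits_eq:
  "partition_splits p = {x. psize (fst x) + psize (snd x) = psize p \<and> case_prod punion x = p}"
  by (auto simp: partition_splits_def psize_def Rep_punion simp flip: Rep_partition_inject
      sum_mset.union)

lemma finite_psize_pairs: "finite {x :: partition \<times> partition. psize (fst x) + psize (snd x) = n}"
  by (rule finite_subset[of _ "{p. psize p \<le> n} \<times> {p. psize p \<le> n}"])
     (auto intro: finite_psize_le)

lemma finite_partition_splits: "finite (partition_splits p)"
  unfolding partition_splits_eq by (rule finite_subset[OF _ finite_psize_pairs[of "psize p"]]) auto

lemma useries_mult_eq_sum_splits:
  "useries_mult F G p = (\<Sum>(\<alpha>, \<beta>)\<in>partition_splits p. F \<alpha> * G \<beta>)"
  by (simp add: useries_mult_def partition_splits_def)

definition useries_to_fps :: "useries \<Rightarrow> rat fps" where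
  "useries_to_fps F = Abs_fps (\<lambda>n. \<Sum>p | psize p = n. F p)"

lemma useries_to_fps_nth: "useries_to_fps F $ n = (\<Sum>p | psize p = n. F p)"
  by (simp add: useries_to_fps_def)

lemma useries_to_fps_mult: "useries_to_fps (useries_mult F G) = useries_to_fps F * useries_to_fps G"
proof (rule fps_ext)
  fix n
  define S where "S = {x :: partition \<times> partition. psize (fst x) + psize (snd x) = n}"
  define h where "h = (\<lambda>(\<alpha>, \<beta>). F \<alpha> * G \<beta>)"
  have splits: "partition_splits p = {x\<in>S. case_prod punion x = p}" if "psize p = n" for p
    using that by (auto simp: S_def partition_splits_eq psize_punion)
  have slices: "{x\<in>S. psize (fst x) = i} = {\<alpha>. psize \<alpha> = i} \<times> {\<beta>. psize \<beta> = n - i}"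
    if "i \<in> {0..n}" for i
    using that by (auto simp: S_def)
  have "useries_to_fps (useries_mult F G) $ n = (\<Sum>p | psize p = n. \<Sum>x\<in>partition_splits p. h x)"
    by (simp add: useries_to_fps_nth useries_mult_eq_sum_splits h_def)
  also have "\<dots> = sum h S"
    by (simp add: splits, rule sum.group)
       (auto simp: S_def finite_psize_pairs finite_psize_eq psize_punion)
  also have "\<dots> = (\<Sum>i\<in>{0..n}. \<Sum>x\<in>{x\<in>S. psize (fst x) = i}. h x)"
    by (rule sum.group[symmetric]) (auto simp: S_def finite_psize_pairs)
  also have "\<dots> = (\<Sum>i=0..n. \<Sum>x\<in>{\<alpha>. psize \<alpha> = i} \<times> {\<beta>. psize \<beta> = n - i}. h x)"
    by (simp add: slices)
  also have "\<dots> = (\<Sum>i=0..n. useries_to_fps F $ i * useries_to_fps G $ (n - i))"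
    by (simp add: useries_to_fps_nth sum_product sum.cartesian_product h_def)
  finally show "useries_to_fps (useries_mult F G) $ n = (useries_to_fps F * useries_to_fps G) $ n"
    by (simp add: fps_mult_nth)
qed

lemma useries_to_fps_sum:
  "useries_to_fps (\<lambda>p. \<Sum>a\<in>S. c a * g a p) = (\<Sum>a\<in>S. fps_const (c a) * useries_to_fps (g a))"
  by (rule fps_ext) (simp add: useries_to_fps_nth fps_sum_nth sum_distrib_left sum.swap[of _ S])

definition partition_splits_on :: "'i set \<Rightarrow> partition \<Rightarrow> ('i \<Rightarrow> partition) set" where
  "partition_splits_on I p = {d \<in> I \<rightarrow>\<^sub>E UNIV. (\<Sum>i\<in>I. Rep_partition (d i)) = Rep_partition p}"

lemma useries_prod_eq_sum_splits_on:
  "useries_prod I F p = (\<Sum>d\<in>partition_splits_on I p. \<Prod>i\<in>I. F i (d i))"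
  by (simp add: useries_prod_def partition_splits_on_def)

lemma zero_not_in_sum_Rep_partition: "0 \<notin># (\<Sum>i\<in>I. Rep_partition (d i))"
  by (cases "finite I") (simp_all add: set_mset_sum)

lemma finite_partition_splits_on:
  assumes "finite I"
  shows "finite (partition_splits_on I p)"
proof (rule finite_subset)
  show "partition_splits_on I p \<subseteq> I \<rightarrow>\<^sub>E {\<alpha>. psize \<alpha> \<le> psize p}"
  proof
    fix d assume d: "d \<in> partition_splits_on I p"
    have "psize (d i) \<le> psize p" if "i \<in> I" for i
    proof -
      have "Rep_partition p = Rep_partition (d i) + (\<Sum>j\<in>I - {i}. Rep_partition (d j))"
        using d that assms by (simp add: partition_splits_on_def sum.remove)
      then show ?thesis by (simp add: psize_def)
    qed
    then show "d \<in> I \<rightarrow>\<^sub>E {\<alpha>. psize \<alpha> \<le> psize p}"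
      using d by (auto simp: partition_splits_on_def)
  qed
qed (use assms in \<open>auto intro: finite_PiE finite_psize_le\<close>)

lemma partition_splits_on_empty:
  "partition_splits_on {} p = (if psize p = 0 then {\<lambda>_. undefined} else {})"
  by (simp add: partition_splits_on_def psize_eq_0_iff eq_commute[of "{#}"])

lemma useries_to_fps_prod_empty: "useries_to_fps (useries_prod {} F) = 1"
proof (rule fps_ext)
  fix n
  show "useries_to_fps (useries_prod {} F) $ n = 1 $ n"
    by (auto simp: useries_to_fps_nth useries_prod_eq_sum_splits_on partition_splits_on_empty
        psize_eq_0_set)
qed

lemma bij_betw_partition_splits_on_insert:
  assumes I: "finite I" "i \<notin> I"
  shows "bij_betw (\<lambda>((\<alpha>, \<beta>), d). d(i := \<alpha>))
           (SIGMA x:partition_splits p. partition_splits_on I (snd x))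
           (partition_splits_on (insert i I) p)"
proof -
  have sum_upd: "(\<Sum>k\<in>I. Rep_partition (if k = i then \<alpha> else d k)) = (\<Sum>k\<in>I. Rep_partition (d k))"
    for \<alpha> d
    using I by (intro sum.cong) auto
  show ?thesis
    by (rule bij_betw_byWitness
        [where f' = "\<lambda>d. ((d i, Abs_partition (\<Sum>k\<in>I. Rep_partition (d k))), d(i := undefined))"])
       (use I in \<open>auto simp: partition_splits_def partition_splits_on_def PiE_iff extensional_def
          sum_upd Rep_partition_inverse zero_not_in_sum_Rep_partition\<close>)
qed

lemma useries_prod_insert:
  assumes I: "finite I" "i \<notin> I"
  shows "useries_prod (insert i I) F = useries_mult (F i) (useries_prod I F)"
proof
  fix p
  have "useries_mult (F i) (useries_prod I F) p
      = (\<Sum>((\<alpha>, \<beta>), d)\<in>(SIGMA x:partition_splits p. partition_splits_on I (snd x)).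
           F i \<alpha> * (\<Prod>k\<in>I. F k (d k)))"
    by (simp add: useries_mult_eq_sum_splits useries_prod_eq_sum_splits_on sum_distrib_left
        sum.Sigma finite_partition_splits finite_partition_splits_on I case_prod_beta)
  also have "\<dots> = (\<Sum>d\<in>partition_splits_on (insert i I) p. \<Prod>k\<in>insert i I. F k (d k))"
    using I by (subst sum.reindex_bij_betw[OF bij_betw_partition_splits_on_insert[OF I], symmetric])
      (auto intro!: sum.cong prod.cong)
  also have "\<dots> = useries_prod (insert i I) F p"
    by (simp add: useries_prod_eq_sum_splits_on)
  finally show "useries_prod (insert i I) F p = useries_mult (F i) (useries_prod I F) p" ..
qed

lemma useries_to_fps_prod:
  "finite I \<Longrightarrow> useries_to_fps (useries_prod I F) = (\<Prod>i\<in>I. useries_to_fps (F i))"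
  by (induction I rule: finite_induct)
     (simp_all add: useries_to_fps_prod_empty useries_prod_insert useries_to_fps_mult)

definition subpartitions :: "partition \<Rightarrow> partition set" where
  "subpartitions p = {\<alpha>. Rep_partition \<alpha> \<subseteq># Rep_partition p}"

lemma finite_subpartitions: "finite (subpartitions p)"
  by (rule finite_subset[OF _ finite_psize_le[of "psize p"]])
     (auto simp: subpartitions_def psize_def dest!: subset_mset.le_iff_add[THEN iffD1])

lemma psize_less_subpartition: "\<alpha> \<in> subpartitions p - {p} \<Longrightarrow> psize \<alpha> < psize p"
  by (auto simp: subpartitions_def subset_mset.less_le Rep_partition_inject intro: psize_less)

lemma fst_partition_splits: "fst ` partition_splits p = subpartitions p"
proof (intro equalityI subsetI)
  fix \<alpha> assume "\<alpha> \<in> subpartitions p"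
  moreover have "0 \<notin># Rep_partition p - Rep_partition \<alpha>"
    by (meson in_diffD zero_not_in_Rep_partition)
  ultimately have "(\<alpha>, Abs_partition (Rep_partition p - Rep_partition \<alpha>)) \<in> partition_splits p"
    by (simp add: subpartitions_def partition_splits_def)
  then show "\<alpha> \<in> fst ` partition_splits p" by force
qed (auto simp: subpartitions_def partition_splits_def dest: sym)

lemma inj_on_fst_partition_splits: "inj_on fst (partition_splits p)"
  by (rule inj_onI) (auto simp: partition_splits_def simp flip: Rep_partition_inject,
      metis add_left_cancel)

lemma useries_mult_const_one: "useries_mult G (\<lambda>_. 1) p = (\<Sum>\<alpha>\<in>subpartitions p. G \<alpha>)"
  by (simp add: useries_mult_eq_sum_splits case_prod_beta flip: fst_partition_splits
      sum.reindex[OF inj_on_fst_partition_splits, unfolded comp_def])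

function ubracket_rec :: "(partition \<Rightarrow> rat) \<Rightarrow> useries" where
  "ubracket_rec f p = f p - (\<Sum>\<alpha>\<in>subpartitions p - {p}. ubracket_rec f \<alpha>)"
  by auto
termination
  by (relation "measure (\<lambda>(f, p). psize p)") (auto intro: psize_less_subpartition)

declare ubracket_rec.simps [simp del]

lemma useries_mult_ubracket_rec: "useries_mult (ubracket_rec f) (\<lambda>_. 1) = f"
proof
  fix p
  have "p \<in> subpartitions p" by (simp add: subpartitions_def)
  then show "useries_mult (ubracket_rec f) (\<lambda>_. 1) p = f p"
    by (simp add: useries_mult_const_one finite_subpartitions sum.remove
        ubracket_rec.simps[of f p])
qed

lemma useries_mult_const_one_cancel:
  assumes "useries_mult G (\<lambda>_. 1) = useries_mult H (\<lambda>_. 1)"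
  shows "G = H"
proof
  fix p show "G p = H p"
  proof (induction p rule: measure_induct_rule[of psize])
    case (less p)
    have "p \<in> subpartitions p" by (simp add: subpartitions_def)
    moreover have "(\<Sum>\<alpha>\<in>subpartitions p - {p}. G \<alpha>) = (\<Sum>\<alpha>\<in>subpartitions p - {p}. H \<alpha>)"
      by (intro sum.cong refl less psize_less_subpartition)
    ultimately show ?case
      using fun_cong[OF assms, of p]
      by (simp add: useries_mult_const_one finite_subpartitions sum.remove)
  qed
qed

lemma ubracket_eq_iff: "ubracket f = G \<longleftrightarrow> useries_mult G (\<lambda>_. 1) = f"
proof -
  have ex1: "\<exists>!G. useries_mult G (\<lambda>_. 1) = f"
    using useries_mult_ubracket_rec useries_mult_const_one_cancel by metis
  show ?thesis
    unfolding ubracket_def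
  proof
    assume "(THE G. useries_mult G (\<lambda>_. 1) = f) = G"
    with theI'[OF ex1] show "useries_mult G (\<lambda>_. 1) = f" by simp
  qed (rule the1_equality[OF ex1])
qed

lemma ubracket_THE_eq: "ubracket (THE h. ubracket h = G) = G"
proof -
  have "\<exists>!h. ubracket h = G"
    by (rule ex1I[of _ "useries_mult G (\<lambda>_. 1)"]) (auto simp: ubracket_eq_iff)
  then show ?thesis by (rule theI')
qed

lemma ubracket_induced_prod:
  "ubracket (induced_prod f g) = useries_mult (ubracket f) (ubracket g)"
  unfolding induced_prod_def by (rule ubracket_THE_eq)

lemma ubracket_odot_set: "ubracket (odot_set I g) = useries_prod I (\<lambda>i. ubracket (g i))"
  unfolding odot_set_def by (rule ubracket_THE_eq)

lemma useries_to_fps_const_one_nth_0: "useries_to_fps (\<lambda>_. 1) $ 0 = 1"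
  by (simp add: useries_to_fps_nth psize_eq_0_set)

lemma qbracket_eq_mult_inverse: "qbracket f = useries_to_fps f * inverse (useries_to_fps (\<lambda>_. 1))"
proof -
  have "Abs_fps (\<lambda>n. of_nat (card {p. psize p = n})) = useries_to_fps (\<lambda>_. 1)"
    by (simp add: useries_to_fps_def)
  then show ?thesis
    using useries_to_fps_const_one_nth_0
    by (simp add: qbracket_def fps_divide_unit flip: useries_to_fps_def)
qed

lemma qbracket_eq_useries_to_fps_ubracket: "qbracket f = useries_to_fps (ubracket f)"
proof -
  have "useries_to_fps f = useries_to_fps (ubracket f) * useries_to_fps (\<lambda>_. 1)"
    by (metis ubracket_eq_iff useries_to_fps_mult)
  then show ?thesis
    using useries_to_fps_const_one_nth_0
    by (simp add: qbracket_eq_mult_inverse mult.assoc inverse_mult_eq_1')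
qed

lemma qbracket_sum:
  "qbracket (\<lambda>p. \<Sum>a\<in>S. c a * g a p) = (\<Sum>a\<in>S. fps_const (c a) * qbracket (g a))"
  by (simp add: qbracket_eq_mult_inverse useries_to_fps_sum sum_distrib_right mult.assoc)

lemma qbracket_induced_prod: "qbracket (induced_prod f g) = qbracket f * qbracket g"
  by (simp add: qbracket_eq_useries_to_fps_ubracket ubracket_induced_prod useries_to_fps_mult)

lemma qbracket_odot_list: "fs \<noteq> [] \<Longrightarrow> qbracket (odot_list fs) = (\<Prod>f\<leftarrow>fs. qbracket f)"
  by (induction fs rule: odot_list.induct) (auto simp: qbracket_induced_prod)

lemma qbracket_odot_set: "finite I \<Longrightarrow> qbracket (odot_set I g) = (\<Prod>i\<in>I. qbracket (g i))"
  by (simp add: qbracket_eq_useries_to_fps_ubracket ubracket_odot_set useries_to_fps_prod)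

theorem proposition3p2p5:
  fixes f :: "nat \<Rightarrow> partition \<Rightarrow> rat" and n :: nat
  assumes "n \<ge> 1"
  shows "qbracket (odot_list (map f [1..<n+1])) = (\<Prod>i=1..n. qbracket (f i))
         \<and> qbracket (connected_prod n f) = connected_qbracket n f"
proof
  have "qbracket (odot_list (map f [1..<n+1])) = (\<Prod>i\<leftarrow>[1..<n+1]. qbracket (f i))"
    using assms by (simp add: qbracket_odot_list comp_def)
  also have "\<dots> = (\<Prod>i=1..n. qbracket (f i))"
    by (simp add: prod.distinct_set_conv_list[symmetric] atLeastLessThanSuc_atLeastAtMost
        del: upt_Suc)
  finally show "qbracket (odot_list (map f [1..<n+1])) = (\<Prod>i=1..n. qbracket (f i))" .
next
  have "finite \<alpha>" if "\<alpha> \<in> set_partitions n" for \<alpha>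
    using that finite_elements[of "{1..n}" \<alpha>] by (simp add: set_partitions_def)
  then show "qbracket (connected_prod n f) = connected_qbracket n f"
    by (simp add: connected_prod_def connected_qbracket_def qbracket_sum qbracket_odot_set
        fps_of_int)
qed

end
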